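(* Let $z:[0,\infty)\to X_{0+}$ be a solution of the modified Becker–Döring equations obtained by the truncation construction described in the context. Suppose there exist $R'\in[0,R)$ and $t_0\ge0$ such that $$\lambda(t):=\frac{z_1(t)}{N(z(t))}\le R'\qquad\text{for all }t\ge t_0 .$$ Then every element $z^\infty$ of the weak-$*$ $\omega$-limit set of $z$ satisfies $\rho(z^\infty)=\rho_0$.
   Context: Let $(q_l)_{l\ge1}$ be positive with $q_1=1$, $0<R:=\lim_l q_l/q_{l+1}<\infty$, and $\gamma_l>0$ with $\gamma_l/l\to0$. $X=\{z:\sum_l l|z_l|<\infty\}$; a sequence in $X$ converges weak-$*$ iff it is norm-bounded and converges componentwise. $X_{0+}$: nonnegative elements; $\rho(z)=\sum_l lz_l$, $N(z)=\sum_lz_l$, $J_l(z)=\gamma_l\big(z_1z_l-N(z)\frac{q_l}{q_{l+1}}z_{l+1}\big)$ ($l\ge1$), $J_0(z)=-\sum_{l\ge1}J_l(z)$. Fix $y\in X_{0+}$ with $y_1>0$, $\rho_0:=\rho(y)>0$. For $m\ge2$ let $z^{(m)}$ solve $\dot z_l=J_{l-1}(z)-J_l(z)$ ($2\le l\le m-1$), $\dot z_m=J_{m-1}(z)$, $\dot z_1=-J_1(z)-\sum_{l=1}^{m-1}J_l(z)$, $z_l(0)=y_l$ ($l\le m$), $z_l\equiv0$ for $l>m$. The solution $z$ is a continuous $[0,\infty)\to X$ map with $z^{(m_j)}_l\to z_l$ uniformly on compacts for every $l$ along some subsequence $m_j\to\infty$; it satisfies $z(t)\in X_{0+}$, $\rho(z(t))=\rho_0$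 for all $t$, and $\frac{d}{dt}\sum_{n\ge l}z_n(t)=J_{l-1}(z(t))$ for $l\ge2$. The weak-$*$ $\omega$-limit set is $\{w: w=\text{weak-}*\lim_k z(t_k)\text{ for some }t_k\to\infty\}$. *)

theory Defs
  imports "HOL-Analysis.Analysis"
begin

text \<open>Elements of X are sequences indexed by l \<ge> 1; we represent them as
  functions nat \<Rightarrow> real with the (unused) component 0 fixed to 0.\<close>

definition Xspace :: "(nat \<Rightarrow> real) set" where
  "Xspace = {z. z 0 = 0 \<and> summable (\<lambda>l. real l * \<bar>z l\<bar>)}"

definition normX :: "(nat \<Rightarrow> real) \<Rightarrow> real" where
  "normX z = (\<Sum>l. real l * \<bar>z l\<bar>)"

definition X0plus :: "(nat \<Rightarrow> real) set" where
  "X0plus = {z \<in> Xspace. \<forall>l. z l \<ge> 0}"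

definition rho :: "(nat \<Rightarrow> real) \<Rightarrow> real" where
  "rho z = (\<Sum>l. real l * z l)"

definition Nmass :: "(nat \<Rightarrow> real) \<Rightarrow> real" where
  "Nmass z = (\<Sum>l. z l)"

definition Jflux :: "(nat \<Rightarrow> real) \<Rightarrow> (nat \<Rightarrow> real) \<Rightarrow> nat \<Rightarrow> (nat \<Rightarrow> real) \<Rightarrow> real" where
  "Jflux q \<gamma> l z = \<gamma> l * (z 1 * z l - Nmass z * (q l / q (Suc l)) * z (Suc l))"

definition weak_star_conv :: "(nat \<Rightarrow> nat \<Rightarrow> real) \<Rightarrow> (nat \<Rightarrow> real) \<Rightarrow> bool" where
  "weak_star_conv s w \<longleftrightarrow> w \<in> Xspace \<and> (\<forall>k. s k \<in> Xspace) \<and>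
     (\<exists>B. \<forall>k. normX (s k) \<le> B) \<and> (\<forall>l. (\<lambda>k. s k l) \<longlonglongrightarrow> w l)"

definition omega_limit_set :: "(real \<Rightarrow> nat \<Rightarrow> real) \<Rightarrow> (nat \<Rightarrow> real) set" where
  "omega_limit_set z = {w. \<exists>t :: nat \<Rightarrow> real. filterlim t at_top sequentially \<and>
       weak_star_conv (\<lambda>k. z (t k)) w}"

definition truncated_solution ::
  "(nat \<Rightarrow> real) \<Rightarrow> (nat \<Rightarrow> real) \<Rightarrow> (nat \<Rightarrow> real) \<Rightarrow> nat \<Rightarrow> (real \<Rightarrow> nat \<Rightarrow> real) \<Rightarrow> bool" where
  "truncated_solution q \<gamma> y m zm \<longleftrightarrow>
     (\<forall>t\<ge>0. zm t 0 = 0 \<and> (\<forall>l>m. zm t l = 0)) \<and>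
     (\<forall>l. 1 \<le> l \<and> l \<le> m \<longrightarrow> zm 0 l = y l) \<and>
     (\<forall>t\<ge>0.
        ((\<lambda>s. zm s 1) has_real_derivative
           (- Jflux q \<gamma> 1 (zm t) - (\<Sum>k=1..m-1. Jflux q \<gamma> k (zm t)))) (at t within {0..}) \<and>
        (\<forall>l. 2 \<le> l \<and> l \<le> m - 1 \<longrightarrow>
           ((\<lambda>s. zm s l) has_real_derivative
              (Jflux q \<gamma> (l-1) (zm t) - Jflux q \<gamma> l (zm t))) (at t within {0..})) \<and>
        ((\<lambda>s. zm s m) has_real_derivative Jflux q \<gamma> (m-1) (zm t)) (at t within {0..}))"

definition constructed_solution ::
  "(nat \<Rightarrow> real) \<Rightarrow> (nat \<Rightarrow> real) \<Rightarrow> (nat \<Rightarrow> real) \<Rightarrow> (real \<Rightarrow> nat \<Rightarrow> real) \<Rightarrow> bool" where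
  "constructed_solution q \<gamma> y z \<longleftrightarrow>
     (\<exists>zm :: nat \<Rightarrow> real \<Rightarrow> nat \<Rightarrow> real. \<exists>m :: nat \<Rightarrow> nat.
        (\<forall>n\<ge>2. truncated_solution q \<gamma> y n (zm n)) \<and>
        strict_mono m \<and> (\<forall>j. m j \<ge> 2) \<and>
        (\<forall>T\<ge>0. \<forall>l. uniform_limit {0..T} (\<lambda>j t. zm (m j) t l) (\<lambda>t. z t l) sequentially)) \<and>
     (\<forall>t\<ge>0. z t \<in> X0plus) \<and>
     (\<forall>t\<ge>0. ((\<lambda>s. normX (\<lambda>l. z s l - z t l)) \<longlongrightarrow> 0) (at t within {0..})) \<and>
     (\<forall>t\<ge>0. rho (z t) = rho y) \<and>
     (\<forall>l\<ge>2. \<forall>t\<ge>0.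
        ((\<lambda>s. \<Sum>n. z s (n + l)) has_real_derivative Jflux q \<gamma> (l-1) (z t)) (at t within {0..}))"

end

theory Submission
  imports Defs
begin

(* The tail sums M l t = (\<Sum>n\<ge>l. z t n) satisfy d/dt M l = J (l - 1) (z t). For t \<ge> t0 we have
   z 1 \<le> R' N, and q (l - 1) / q l exceeds some R1 > R' for large l, so at an index l where
   M l t - S l is maximal the flux J (l - 1) is nonpositive, provided S satisfies the discrete
   supersolution inequality R' S (l - 1) - (R' + R1) S l + R1 S (l + 1) \<le> 0. A comparison principle
   then bounds M l t by a time-independent summable supersolution S, built from geometric
   profiles, for all large l and all t \<ge> t0. Summability of S makes the first moments uniformly
   tight along the trajectory, so no density escapes to ever larger clusters and every weak-*
   limit point keeps the density rho0. *)

section \<open>A comparison principle for tail sums\<close>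

lemma penalized_max_principle:
  fixes G G' :: "nat \<Rightarrow> real \<Rightarrow> real" and Lb K :: nat and tb :: real
  assumes deriv: "\<And>l t. l \<ge> Lb \<Longrightarrow> t \<ge> tb \<Longrightarrow>
        (G l has_real_derivative G' l t) (at t within {tb..})"
    and deriv_neg_at_max: "\<And>l t. l > Lb \<Longrightarrow> t > tb \<Longrightarrow> (\<forall>j\<ge>Lb. G j t \<le> G l t) \<Longrightarrow> G' l t < 0"
    and neg_large: "\<And>l t. l \<ge> Lb \<Longrightarrow> l > K \<Longrightarrow> t \<ge> tb \<Longrightarrow> G l t < 0"
    and neg_boundary: "\<And>t. t \<ge> tb \<Longrightarrow> G Lb t < 0"
    and neg_initial: "\<And>l. l \<ge> Lb \<Longrightarrow> G l tb < 0"
    and l: "l \<ge> Lb" and t: "t \<ge> tb"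
  shows "G l t < 0"
proof (rule ccontr)
  assume "\<not> G l t < 0"
  with neg_large l t have l_le: "l \<le> K" by force
  define A where "A = (\<Union>j\<in>{Lb..K}. {s \<in> {tb..t}. 0 \<le> G j s})"
  have "closed A"
    unfolding A_def
  proof (intro closed_UN ballI continuous_on_closed_Collect_le)
    fix j assume "j \<in> {Lb..K}"
    then show "continuous_on {tb..t} (G j)"
      using DERIV_continuous_on[OF deriv, of j] by (auto intro: continuous_on_subset)
  qed auto
  moreover have "t \<in> A"
    using \<open>\<not> G l t < 0\<close> l l_le t by (auto simp: A_def intro!: bexI[of _ l])
  moreover have "bdd_below A"
    by (auto simp: A_def intro!: bdd_belowI[of _ tb])
  ultimately have "Inf A \<in> A" and Inf_le: "\<And>s. s \<in> A \<Longrightarrow> Inf A \<le> s"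
    by (auto intro: closed_contains_Inf cInf_lower)
  define \<tau> where "\<tau> = Inf A"
  obtain j where j: "j \<in> {Lb..K}" "0 \<le> G j \<tau>" and \<tau>: "tb \<le> \<tau>" "\<tau> \<le> t"
    using \<open>Inf A \<in> A\<close> unfolding \<tau>_def A_def by auto
  have "\<tau> > tb"
    using j neg_initial[of j] \<tau> by (cases "\<tau> = tb") auto
  obtain m where m: "m \<in> {Lb..K}" and m_max: "\<And>i. i \<in> {Lb..K} \<Longrightarrow> G i \<tau> \<le> G m \<tau>"
  proof -
    let ?V = "(\<lambda>i. G i \<tau>) ` {Lb..K}"
    have "Max ?V \<in> ?V" and le_Max: "\<And>i. i \<in> {Lb..K} \<Longrightarrow> G i \<tau> \<le> Max ?V"
      using j(1) by (auto intro!: Max_in Max_ge)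
    then obtain m where "m \<in> {Lb..K}" "Max ?V = G m \<tau>" by blast
    with le_Max show thesis by (intro that) auto
  qed
  have "0 \<le> G m \<tau>" using m_max[OF j(1)] j(2) by linarith
  have max_all: "\<forall>i\<ge>Lb. G i \<tau> \<le> G m \<tau>"
  proof (intro allI impI)
    fix i assume "i \<ge> Lb"
    show "G i \<tau> \<le> G m \<tau>"
    proof (cases "i \<le> K")
      case True with \<open>i \<ge> Lb\<close> show ?thesis by (auto intro: m_max)
    next
      case False
      with \<open>i \<ge> Lb\<close> \<tau> have "G i \<tau> < 0" by (auto intro: neg_large)
      with \<open>0 \<le> G m \<tau>\<close> show ?thesis by linarith
    qed
  qed
  from \<open>0 \<le> G m \<tau>\<close> neg_boundary[of \<tau>] \<tau> m have "m > Lb" by (cases "m = Lb") auto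
  with \<open>\<tau> > tb\<close> max_all have "G' m \<tau> < 0" by (intro deriv_neg_at_max)
  \<comment> \<open>so G m was already nonnegative slightly before \<tau>, contradicting the minimality of \<tau>\<close>
  then obtain d where "d > 0" and
      dec: "\<And>h. h > 0 \<Longrightarrow> \<tau> - h \<in> {tb..} \<Longrightarrow> h < d \<Longrightarrow> G m \<tau> < G m (\<tau> - h)"
    using has_real_derivative_neg_dec_left[OF deriv[of m \<tau>]] m \<tau> by auto
  define h where "h = min (d / 2) (\<tau> - tb)"
  have h: "0 < h" "h < d" "\<tau> - h \<in> {tb..}"
    using \<open>d > 0\<close> \<open>\<tau> > tb\<close> by (auto simp: h_def)
  with dec \<open>0 \<le> G m \<tau>\<close> m \<tau> have "\<tau> - h \<in> A"
    unfolding A_def by (force intro!: bexI[of _ m])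
  then have "\<tau> \<le> \<tau> - h" unfolding \<tau>_def by (rule Inf_le)
  with h show False by linarith
qed

lemma tail_comparison_principle:
  fixes M D :: "nat \<Rightarrow> real \<Rightarrow> real" and S :: "nat \<Rightarrow> real" and Lb :: nat and tb C :: real
  assumes deriv: "\<And>l t. l \<ge> Lb \<Longrightarrow> t \<ge> tb \<Longrightarrow>
        (M l has_real_derivative D l t) (at t within {tb..})"
    and deriv_nonpos_at_max: "\<And>l t. l > Lb \<Longrightarrow> t > tb \<Longrightarrow>
        (\<forall>j\<ge>Lb. M j t - S j \<le> M l t - S l) \<Longrightarrow> D l t \<le> 0"
    and decay: "\<And>l t. l \<ge> Lb \<Longrightarrow> t \<ge> tb \<Longrightarrow> M l t \<le> C / real l"
    and S_nonneg: "\<And>l. S l \<ge> 0"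
    and boundary: "\<And>t. t \<ge> tb \<Longrightarrow> M Lb t \<le> S Lb"
    and initial: "\<And>l. l \<ge> Lb \<Longrightarrow> M l tb \<le> S l"
    and l: "l \<ge> Lb" and t: "t \<ge> tb"
  shows "M l t \<le> S l"
proof (rule field_le_epsilon)
  \<comment> \<open>The penalty makes the derivative at a maximum strictly negative, and the decay bound
    leaves only finitely many indices that can reach the penalised level.\<close>
  fix \<delta> :: real assume "\<delta> > 0"
  define \<epsilon> where "\<epsilon> = \<delta> / (1 + t - tb)"
  have "\<epsilon> > 0" using \<open>\<delta> > 0\<close> t by (simp add: \<epsilon>_def)
  define G where "G j s = M j s - S j - \<epsilon> * (1 + s - tb)" for j s
  have "G l t < 0"
  proof (rule penalized_max_principle[where G = G and l = l and t = t
        and G' = "\<lambda>j s. D j s - \<epsilon>" and K = "nat \<lceil>C / \<epsilon>\<rceil>"])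
    show "(G j has_real_derivative D j s - \<epsilon>) (at s within {tb..})" if "j \<ge> Lb" "s \<ge> tb" for j s
      unfolding G_def by (auto intro!: derivative_eq_intros deriv that)
    show "D j s - \<epsilon> < 0" if "j > Lb" "s > tb" "\<forall>i\<ge>Lb. G i s \<le> G j s" for j s
      using deriv_nonpos_at_max[of j s] that \<open>\<epsilon> > 0\<close> by (simp add: G_def)
    show "G j s < 0" if "j \<ge> Lb" "j > nat \<lceil>C / \<epsilon>\<rceil>" "s \<ge> tb" for j s
    proof -
      have "C / \<epsilon> < real j" using that(2) by linarith
      then have "C / real j < \<epsilon>"
        using \<open>\<epsilon> > 0\<close> that(2) by (simp add: field_simps)
      moreover have "M j s \<le> C / real j" using decay that by auto
      moreover have "\<epsilon> \<le> \<epsilon> * (1 + s - tb)" using \<open>\<epsilon> > 0\<close> that(3) by simp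
      ultimately show ?thesis using S_nonneg[of j] by (simp add: G_def)
    qed
    show "G Lb s < 0" if "s \<ge> tb" for s
      using boundary[OF that] mult_pos_pos[OF \<open>\<epsilon> > 0\<close>, of "1 + s - tb"] that by (simp add: G_def)
    show "G j tb < 0" if "j \<ge> Lb" for j
      using initial[OF that] \<open>\<epsilon> > 0\<close> by (simp add: G_def)
  qed (use l t in auto)
  moreover have "\<epsilon> * (1 + t - tb) = \<delta>" using t by (simp add: \<epsilon>_def)
  ultimately show "M l t \<le> S l + \<delta>" by (simp add: G_def)
qed

section \<open>Tails and first moments of nonnegative sequences\<close>

lemma summable_if_summable_moment:
  fixes x :: "nat \<Rightarrow> real"
  assumes "\<And>n. x n \<ge> 0" and "summable (\<lambda>n. real n * x n)"
  shows "summable x"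
proof (rule summable_comparison_test_ev[OF _ assms(2)])
  have "norm (x n) \<le> real n * x n" if "n \<ge> 1" for n
    using assms(1)[of n] that mult_right_mono[of 1 "real n" "x n"] by simp
  then show "eventually (\<lambda>n. norm (x n) \<le> real n * x n) sequentially"
    unfolding eventually_sequentially by blast
qed

lemma tendsto_suminf_shift_zero:
  fixes f :: "nat \<Rightarrow> real"
  assumes "summable f"
  shows "(\<lambda>k. \<Sum>n. f (n + k)) \<longlonglongrightarrow> 0"
proof -
  have "(\<lambda>k. suminf f - (\<Sum>n<k. f n)) \<longlonglongrightarrow> suminf f - suminf f"
    using assms by (intro tendsto_diff tendsto_const summable_LIMSEQ)
  moreover have "suminf f - (\<Sum>n<k. f n) = (\<Sum>n. f (n + k))" for k
    using suminf_split_initial_segment[OF assms, of k] by simp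
  ultimately show ?thesis by simp
qed

lemma antimono_summable_imp_mult_tendsto_zero:
  fixes S :: "nat \<Rightarrow> real"
  assumes S_Suc_le: "\<And>n. S (Suc n) \<le> S n" and S_nonneg: "\<And>n. S n \<ge> 0" and "summable S"
  shows "(\<lambda>n. real n * S n) \<longlonglongrightarrow> 0"
proof (rule real_tendsto_sandwich[where f = "\<lambda>_. 0" and h = "\<lambda>n. 2 * (\<Sum>k. S (k + n div 2))"])
  have "filterlim (\<lambda>n::nat. n div 2) sequentially sequentially"
    unfolding filterlim_at_top eventually_sequentially
  proof
    fix Z :: nat
    show "\<exists>N. \<forall>n\<ge>N. Z \<le> n div 2"
      using div_le_mono[of "2 * Z" _ 2] by (intro exI[of _ "2 * Z"]) auto
  qed
  then have "(\<lambda>n. 2 * (\<Sum>k. S (k + n div 2))) \<longlonglongrightarrow> 2 * 0"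
    by (intro tendsto_mult tendsto_const filterlim_compose[OF tendsto_suminf_shift_zero]
        \<open>summable S\<close>)
  then show "(\<lambda>n. 2 * (\<Sum>k. S (k + n div 2))) \<longlonglongrightarrow> 0" by simp
  show "eventually (\<lambda>n. real n * S n \<le> 2 * (\<Sum>k. S (k + n div 2))) sequentially"
  proof (intro always_eventually allI)
    fix n :: nat
    have "real n \<le> 2 * real (n - n div 2)" by linarith
    then have "real n * S n \<le> 2 * real (n - n div 2) * S n"
      using S_nonneg[of n] by (rule mult_right_mono)
    then have "real n * S n \<le> 2 * (real (n - n div 2) * S n)" by (simp only: mult.assoc)
    also have "real (n - n div 2) * S n = (\<Sum>k\<in>{n div 2..<n}. S n)" by simp
    also have "\<dots> \<le> (\<Sum>k\<in>{n div 2..<n}. S k)"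
      using lift_Suc_antimono_le[of S, OF S_Suc_le] by (intro sum_mono) auto
    also have "\<dots> = (\<Sum>k\<in>{0..<n - n div 2}. S (k + n div 2))"
      using sum.shift_bounds_nat_ivl[of S 0 "n div 2" "n - n div 2"] by simp
    also have "\<dots> \<le> (\<Sum>k. S (k + n div 2))"
      using \<open>summable S\<close> S_nonneg by (intro sum_le_suminf) auto
    finally show "real n * S n \<le> 2 * (\<Sum>k. S (k + n div 2))" by simp
  qed
qed (use S_nonneg in auto)

lemma sum_index_times_difference:
  fixes T :: "nat \<Rightarrow> real"
  assumes "L \<le> K"
  shows "(\<Sum>n\<in>{L..<K}. real n * (T n - T (Suc n))) + (real K - 1) * T K
           = (real L - 1) * T L + (\<Sum>n\<in>{L..<K}. T n)"
  using assms
proof (induction K rule: dec_induct)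
  case (step K)
  then show ?case by (simp add: algebra_simps)
qed simp

lemma tail_sum_diff:
  fixes x :: "nat \<Rightarrow> real"
  assumes "summable x"
  shows "x l = (\<Sum>n. x (n + l)) - (\<Sum>n. x (n + Suc l))"
  using suminf_split_head[of "\<lambda>n. x (n + l)"] assms by simp

lemma tail_sum_le_moment_div:
  fixes x :: "nat \<Rightarrow> real"
  assumes x_nonneg: "\<And>n. x n \<ge> 0" and moment: "summable (\<lambda>n. real n * x n)" and "l \<ge> 1"
  shows "(\<Sum>n. x (n + l)) \<le> (\<Sum>n. real n * x n) / real l"
proof -
  have "summable x" using x_nonneg moment by (rule summable_if_summable_moment)
  then have "real l * (\<Sum>n. x (n + l)) = (\<Sum>n. real l * x (n + l))"
    by (simp add: suminf_mult)
  also have "\<dots> \<le> (\<Sum>n. real (n + l) * x (n + l))"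
    using \<open>summable x\<close> summable_iff_shift[of "\<lambda>n. real n * x n" l] moment x_nonneg
    by (intro suminf_le summable_mult) (auto intro: mult_right_mono)
  also have "\<dots> \<le> (\<Sum>n. real n * x n)"
    using suminf_split_initial_segment[OF moment, of l] x_nonneg by (simp add: sum_nonneg)
  finally show ?thesis using \<open>l \<ge> 1\<close> by (simp add: field_simps)
qed

lemma moment_le_partial_sum_plus_majorant:
  fixes x S :: "nat \<Rightarrow> real"
  assumes x_nonneg: "\<And>n. x n \<ge> 0" and moment: "summable (\<lambda>n. real n * x n)"
    and majorant: "\<And>n. n \<ge> L \<Longrightarrow> (\<Sum>k. x (k + n)) \<le> S n"
    and "summable S" and "L \<ge> 1"
  shows "(\<Sum>n. real n * x n) \<le> (\<Sum>n<L. real n * x n) + real L * S L + (\<Sum>n. S (n + L))"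
proof (rule suminf_le_const[OF moment])
  define T where "T n = (\<Sum>k. x (k + n))" for n
  have "summable x" using x_nonneg moment by (rule summable_if_summable_moment)
  then have x_eq: "x n = T n - T (Suc n)" for n
    unfolding T_def by (rule tail_sum_diff)
  have T_nonneg: "T n \<ge> 0" for n
    unfolding T_def using \<open>summable x\<close> x_nonneg by (intro suminf_nonneg) auto
  have S_nonneg: "S n \<ge> 0" if "n \<ge> L" for n
    using T_nonneg[of n] majorant[OF that] by (simp add: T_def)
  have tail_S: "(\<Sum>n\<in>{L..<K}. S n) \<le> (\<Sum>n. S (n + L))" for K
  proof -
    have "(\<Sum>n\<in>{L..<K}. S n) = (\<Sum>n\<in>{0..<K - L}. S (n + L))"
      using sum.shift_bounds_nat_ivl[of S 0 L "K - L"] by (cases "L \<le> K") auto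
    also have "\<dots> \<le> (\<Sum>n. S (n + L))"
      using \<open>summable S\<close> S_nonneg by (intro sum_le_suminf) auto
    finally show ?thesis .
  qed
  have rest_nonneg: "0 \<le> real L * S L + (\<Sum>n. S (n + L))"
    using S_nonneg \<open>summable S\<close> by (intro add_nonneg_nonneg mult_nonneg_nonneg suminf_nonneg) auto
  fix K
  show "(\<Sum>n<K. real n * x n) \<le> (\<Sum>n<L. real n * x n) + real L * S L + (\<Sum>n. S (n + L))"
  proof (cases "K \<le> L")
    case True
    then have "(\<Sum>n<K. real n * x n) \<le> (\<Sum>n<L. real n * x n)"
      using x_nonneg by (intro sum_mono2) auto
    with rest_nonneg show ?thesis by linarith
  next
    case False
    then have "(\<Sum>n<K. real n * x n) = (\<Sum>n<L. real n * x n) + (\<Sum>n\<in>{L..<K}. real n * x n)"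
      by (simp add: sum.atLeastLessThan_concat flip: atLeast0LessThan)
    moreover have "(\<Sum>n\<in>{L..<K}. real n * x n) + (real K - 1) * T K
        = (real L - 1) * T L + (\<Sum>n\<in>{L..<K}. T n)"
      unfolding x_eq using False by (intro sum_index_times_difference) auto
    moreover have "0 \<le> (real K - 1) * T K" using T_nonneg[of K] False by auto
    moreover have "(real L - 1) * T L \<le> real L * S L"
      using majorant[of L] T_nonneg[of L] S_nonneg[of L] \<open>L \<ge> 1\<close> unfolding T_def
      by (intro mult_mono) auto
    moreover have "(\<Sum>n\<in>{L..<K}. T n) \<le> (\<Sum>n\<in>{L..<K}. S n)"
      unfolding T_def by (intro sum_mono majorant) auto
    ultimately show ?thesis using tail_S[of K] by linarith
  qed
qed

lemma first_moments_uniformly_tight: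
  fixes x :: "'a \<Rightarrow> nat \<Rightarrow> real" and S :: "nat \<Rightarrow> real"
  assumes x_nonneg: "\<And>a n. a \<in> A \<Longrightarrow> x a n \<ge> 0"
    and moment: "\<And>a. a \<in> A \<Longrightarrow> summable (\<lambda>n. real n * x a n)"
    and majorant: "\<And>a l. a \<in> A \<Longrightarrow> l \<ge> L0 \<Longrightarrow> (\<Sum>n. x a (n + l)) \<le> S l"
    and S_Suc_le: "\<And>n. S (Suc n) \<le> S n" and S_nonneg: "\<And>n. S n \<ge> 0" and "summable S"
    and "\<epsilon> > 0"
  shows "\<exists>L. \<forall>a\<in>A. (\<Sum>n. real n * x a n) \<le> (\<Sum>n<L. real n * x a n) + \<epsilon>"
proof -
  have "(\<lambda>L. real L * S L + (\<Sum>n. S (n + L))) \<longlonglongrightarrow> 0 + 0"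
    using S_Suc_le S_nonneg \<open>summable S\<close>
    by (intro tendsto_add antimono_summable_imp_mult_tendsto_zero tendsto_suminf_shift_zero)
  then have "eventually (\<lambda>L. real L * S L + (\<Sum>n. S (n + L)) < \<epsilon> \<and> L \<ge> max 1 L0) sequentially"
    using \<open>\<epsilon> > 0\<close> by (intro eventually_conj order_tendstoD(2) eventually_ge_at_top) auto
  then obtain L where L: "real L * S L + (\<Sum>n. S (n + L)) < \<epsilon>" "L \<ge> 1" "L \<ge> L0"
    unfolding eventually_sequentially by auto
  have "(\<Sum>n. real n * x a n) \<le> (\<Sum>n<L. real n * x a n) + \<epsilon>" if "a \<in> A" for a
  proof -
    have "(\<Sum>n. real n * x a n) \<le> (\<Sum>n<L. real n * x a n) + real L * S L + (\<Sum>n. S (n + L))"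
      using that L
      by (intro moment_le_partial_sum_plus_majorant x_nonneg moment majorant \<open>summable S\<close>) auto
    with L(1) show ?thesis by linarith
  qed
  then show ?thesis by blast
qed

lemma rho_limit_eq_if_tight:
  fixes s :: "nat \<Rightarrow> nat \<Rightarrow> real" and w :: "nat \<Rightarrow> real"
  assumes conv: "\<And>l. (\<lambda>k. s k l) \<longlonglongrightarrow> w l"
    and moments: "eventually (\<lambda>k. (\<forall>l. s k l \<ge> 0) \<and> summable (\<lambda>l. real l * s k l) \<and> rho (s k) = \<rho>)
        sequentially"
    and tight: "\<And>\<epsilon>. \<epsilon> > 0 \<Longrightarrow> \<exists>L. eventually (\<lambda>k. \<rho> \<le> (\<Sum>l<L. real l * s k l) + \<epsilon>) sequentially"
  shows "rho w = \<rho>"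
proof -
  have w_nonneg: "w l \<ge> 0" for l
    using moments by (intro tendsto_lowerbound[OF conv]) (auto elim: eventually_mono)
  have partial: "(\<lambda>k. \<Sum>l<L. real l * s k l) \<longlonglongrightarrow> (\<Sum>l<L. real l * w l)" for L
    by (intro tendsto_sum tendsto_mult tendsto_const conv)
  have partial_le: "(\<Sum>l<L. real l * w l) \<le> \<rho>" for L
  proof (rule tendsto_upperbound[OF partial])
    show "eventually (\<lambda>k. (\<Sum>l<L. real l * s k l) \<le> \<rho>) sequentially"
      using moments by eventually_elim (auto simp: rho_def intro!: sum_le_suminf)
  qed simp
  have "summable (\<lambda>l. real l * w l)"
    using w_nonneg partial_le by (intro summableI_nonneg_bounded) auto
  have "\<rho> \<le> rho w + \<epsilon>" if "\<epsilon> > 0" for \<epsilon>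
  proof -
    obtain L where "eventually (\<lambda>k. \<rho> \<le> (\<Sum>l<L. real l * s k l) + \<epsilon>) sequentially"
      using tight \<open>\<epsilon> > 0\<close> by blast
    then have "\<rho> - \<epsilon> \<le> (\<Sum>l<L. real l * w l)"
      by (intro tendsto_lowerbound[OF partial]) (auto elim: eventually_mono)
    also have "\<dots> \<le> rho w"
      unfolding rho_def using \<open>summable (\<lambda>l. real l * w l)\<close> w_nonneg by (intro sum_le_suminf) auto
    finally show ?thesis by simp
  qed
  then have "\<rho> \<le> rho w" by (rule field_le_epsilon)
  moreover have "rho w \<le> \<rho>"
    unfolding rho_def using \<open>summable (\<lambda>l. real l * w l)\<close> partial_le by (rule suminf_le_const)
  ultimately show ?thesis by simp
qed

section \<open>A summable supersolution\<close>

lemma geometric_profile_supersolution: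
  fixes \<beta> R' R1 :: real
  assumes "0 \<le> \<beta>" "\<beta> \<le> 1" "0 \<le> R1" "R' \<le> R1 * \<beta>" "l \<ge> 1"
  shows "R' * \<beta> ^ (l - 1 - i) - (R' + R1) * \<beta> ^ (l - i) + R1 * \<beta> ^ (Suc l - i) \<le> 0"
proof (cases "l \<le> i")
  case True
  have "R1 * \<beta> ^ (Suc l - i) \<le> R1 * 1"
    using assms by (intro mult_left_mono power_le_one) auto
  with True show ?thesis by simp
next
  case False
  then have exps: "l - i = Suc (l - 1 - i)" "Suc l - i = Suc (Suc (l - 1 - i))" by auto
  have "R' - (R' + R1) * \<beta> + R1 * \<beta>\<^sup>2 = (1 - \<beta>) * (R' - R1 * \<beta>)"
    by (simp add: algebra_simps power2_eq_square)
  also have "\<dots> \<le> 0" using assms by (intro mult_nonneg_nonpos) auto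
  finally have "\<beta> ^ (l - 1 - i) * (R' - (R' + R1) * \<beta> + R1 * \<beta>\<^sup>2) \<le> 0"
    using assms by (intro mult_nonneg_nonpos) auto
  then show ?thesis unfolding exps by (simp add: algebra_simps power2_eq_square)
qed

lemma sum_geometric_profile_le:
  fixes \<beta> :: real
  assumes "0 < \<beta>" "\<beta> < 1"
  shows "(\<Sum>l<K. \<beta> ^ (l - i)) \<le> real i + 1 / (1 - \<beta>)"
proof -
  have "(\<Sum>l<K. \<beta> ^ (l - i)) \<le> (\<Sum>l<i + K. \<beta> ^ (l - i))"
    using assms by (intro sum_mono2) auto
  also have "\<dots> = (\<Sum>l<i. \<beta> ^ (l - i)) + (\<Sum>l\<in>{i..<i + K}. \<beta> ^ (l - i))"
    using sum.atLeastLessThan_concat[of 0 i "i + K" "\<lambda>l. \<beta> ^ (l - i)"]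
    by (simp only: atLeast0LessThan)
  also have "(\<Sum>l<i. \<beta> ^ (l - i)) = real i" by simp
  also have "(\<Sum>l\<in>{i..<i + K}. \<beta> ^ (l - i)) = (\<Sum>k\<in>{0..<K}. \<beta> ^ k)"
    using sum.shift_bounds_nat_ivl[of "\<lambda>l. \<beta> ^ (l - i)" 0 i K] by (simp add: add.commute)
  also have "\<dots> < 1 / (1 - \<beta>)" using assms by (intro geometric_sum_less) auto
  finally show ?thesis by simp
qed

text \<open>By truncated subtraction \<open>\<beta> ^ (l - i) = 1\<close> for \<open>l \<le> i\<close>: each term is a profile that is flat
  up to \<open>i\<close> and decays geometrically beyond it, hence dominates the tail sums of the unit
  vector at \<open>i\<close>.\<close>

definition tail_majorant :: "real \<Rightarrow> real \<Rightarrow> nat \<Rightarrow> (nat \<Rightarrow> real) \<Rightarrow> nat \<Rightarrow> real" where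
  "tail_majorant \<beta> c L0 x l = c * \<beta> ^ (l - L0) + (\<Sum>i. x i * \<beta> ^ (l - i))"

context
  fixes \<beta> c :: real and L0 :: nat and x :: "nat \<Rightarrow> real"
  assumes \<beta>: "0 < \<beta>" "\<beta> < 1" and c_nonneg: "c \<ge> 0" and x_nonneg: "\<And>i. x i \<ge> 0"
    and moment: "summable (\<lambda>i. real i * x i)"
begin

lemma summable_weighted_profiles: "summable (\<lambda>i. x i * \<beta> ^ (l - i))"
proof (rule summable_comparison_test[OF _ summable_if_summable_moment[OF x_nonneg moment]])
  show "\<exists>N. \<forall>i\<ge>N. norm (x i * \<beta> ^ (l - i)) \<le> x i"
    using \<beta> x_nonneg by (auto intro!: mult_left_le power_le_one)
qed

lemma tail_majorant_nonneg: "tail_majorant \<beta> c L0 x l \<ge> 0"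
  unfolding tail_majorant_def using \<beta> c_nonneg x_nonneg
  by (intro add_nonneg_nonneg mult_nonneg_nonneg suminf_nonneg summable_weighted_profiles) auto

lemma tail_majorant_Suc_le: "tail_majorant \<beta> c L0 x (Suc l) \<le> tail_majorant \<beta> c L0 x l"
  unfolding tail_majorant_def using \<beta> c_nonneg x_nonneg
  by (intro add_mono mult_left_mono suminf_le summable_weighted_profiles power_decreasing) auto

lemma tail_majorant_ge_const: "c \<le> tail_majorant \<beta> c L0 x L0"
  unfolding tail_majorant_def using \<beta> x_nonneg
  by (simp add: suminf_nonneg summable_weighted_profiles)

lemma tail_sum_le_tail_majorant: "(\<Sum>n. x (n + l)) \<le> tail_majorant \<beta> c L0 x l"
proof -
  have "(\<Sum>n. x (n + l)) = (\<Sum>n. x (n + l) * \<beta> ^ (l - (n + l)))" by simp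
  also have "\<dots> \<le> (\<Sum>i. x i * \<beta> ^ (l - i))"
    using suminf_split_initial_segment[OF summable_weighted_profiles, of l l] \<beta> x_nonneg
    by (simp add: sum_nonneg)
  also have "\<dots> \<le> tail_majorant \<beta> c L0 x l"
    unfolding tail_majorant_def using \<beta> c_nonneg by simp
  finally show ?thesis .
qed

lemma tail_majorant_supersolution:
  assumes "0 \<le> R1" "R' \<le> R1 * \<beta>" "l \<ge> 1"
  shows "R' * tail_majorant \<beta> c L0 x (l - 1) - (R' + R1) * tail_majorant \<beta> c L0 x l
           + R1 * tail_majorant \<beta> c L0 x (Suc l) \<le> 0"
proof -
  define D where "D i = R' * \<beta> ^ (l - 1 - i) - (R' + R1) * \<beta> ^ (l - i) + R1 * \<beta> ^ (Suc l - i)" for i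
  have D_nonpos: "D i \<le> 0" for i
    unfolding D_def using \<beta> assms by (intro geometric_profile_supersolution) auto
  define U where "U k = (\<Sum>i. x i * \<beta> ^ (k - i))" for k
  have U_sums: "(\<lambda>i. x i * \<beta> ^ (k - i)) sums U k" for k
    unfolding U_def by (intro summable_sums summable_weighted_profiles)
  have "(\<lambda>i. R' * (x i * \<beta> ^ (l - 1 - i)) - (R' + R1) * (x i * \<beta> ^ (l - i))
      + R1 * (x i * \<beta> ^ (Suc l - i))) sums (R' * U (l - 1) - (R' + R1) * U l + R1 * U (Suc l))"
    using sums_add[OF sums_diff[OF sums_mult[OF U_sums[of "l - 1"], of R']
        sums_mult[OF U_sums[of l], of "R' + R1"]] sums_mult[OF U_sums[of "Suc l"], of R1]]
    by simp
  moreover have "(\<lambda>i. R' * (x i * \<beta> ^ (l - 1 - i)) - (R' + R1) * (x i * \<beta> ^ (l - i))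
      + R1 * (x i * \<beta> ^ (Suc l - i))) = (\<lambda>i. x i * D i)"
    unfolding D_def by (rule ext) algebra
  ultimately have D_sums: "(\<lambda>i. x i * D i) sums (R' * U (l - 1) - (R' + R1) * U l + R1 * U (Suc l))"
    by simp
  have "x i * D i \<le> 0" for i
    using x_nonneg D_nonpos by (rule mult_nonneg_nonpos)
  from sums_le[OF this D_sums sums_zero]
  have "R' * U (l - 1) - (R' + R1) * U l + R1 * U (Suc l) \<le> 0" .
  with mult_left_mono[OF D_nonpos[of L0] c_nonneg] show ?thesis
    unfolding tail_majorant_def U_def D_def by argo
qed

lemma summable_tail_majorant: "summable (tail_majorant \<beta> c L0 x)"
proof (rule summableI_nonneg_bounded)
  define B where "B i = real i + 1 / (1 - \<beta>)" for i
  have B_bound: "(\<Sum>l<K. \<beta> ^ (l - i)) \<le> B i" for K i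
    unfolding B_def using \<beta> by (rule sum_geometric_profile_le)
  have "summable (\<lambda>i. x i * B i)"
    using moment summable_if_summable_moment[OF x_nonneg moment]
    by (simp add: B_def distrib_left mult.commute summable_add summable_mult)
  fix K
  have "summable (\<lambda>i. x i * (\<Sum>l<K. \<beta> ^ (l - i)))"
    using summable_sum[of "{..<K}" "\<lambda>l i. x i * \<beta> ^ (l - i)"] summable_weighted_profiles
    by (simp add: sum_distrib_left)
  then have "(\<Sum>i. x i * (\<Sum>l<K. \<beta> ^ (l - i))) \<le> (\<Sum>i. x i * B i)"
    using \<open>summable (\<lambda>i. x i * B i)\<close> x_nonneg B_bound by (intro suminf_le mult_left_mono) auto
  moreover have "(\<Sum>l<K. tail_majorant \<beta> c L0 x l)
      = c * (\<Sum>l<K. \<beta> ^ (l - L0)) + (\<Sum>i. x i * (\<Sum>l<K. \<beta> ^ (l - i)))"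
    unfolding tail_majorant_def
    by (simp add: sum.distrib sum_distrib_left suminf_sum summable_weighted_profiles)
  moreover have "c * (\<Sum>l<K. \<beta> ^ (l - L0)) \<le> c * B L0"
    using B_bound c_nonneg by (rule mult_left_mono)
  ultimately show "(\<Sum>l<K. tail_majorant \<beta> c L0 x l) \<le> c * B L0 + (\<Sum>i. x i * B i)" by simp
qed (rule tail_majorant_nonneg)

end

section \<open>The solution stays tight\<close>

lemma X0plus_nonneg: "z \<in> X0plus \<Longrightarrow> z l \<ge> 0"
  by (simp add: X0plus_def)

lemma X0plus_summable_moment:
  assumes "z \<in> X0plus"
  shows "summable (\<lambda>l. real l * z l)"
proof -
  have "(\<lambda>l. real l * \<bar>z l\<bar>) = (\<lambda>l. real l * z l)"
    using X0plus_nonneg[OF assms] by simp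
  with assms show ?thesis by (simp add: X0plus_def Xspace_def)
qed

lemma X0plus_summable: "z \<in> X0plus \<Longrightarrow> summable z"
  by (rule summable_if_summable_moment[OF X0plus_nonneg X0plus_summable_moment])

lemma X0plus_monomers_le_mult_Nmass:
  assumes "z \<in> X0plus" and "z 1 / Nmass z \<le> R'"
  shows "z 1 \<le> R' * Nmass z"
proof -
  have "z 1 \<le> Nmass z"
    unfolding Nmass_def
    using sum_le_suminf[OF X0plus_summable[OF assms(1)], of "{1}"] X0plus_nonneg[OF assms(1)]
    by auto
  with assms X0plus_nonneg[of z 1] show ?thesis
    by (cases "Nmass z = 0") (auto simp: divide_le_eq mult.commute)
qed

lemma Jflux_nonpos_at_max:
  fixes z S :: "nat \<Rightarrow> real"
  defines "T n \<equiv> \<Sum>j. z (j + n)"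
  assumes "z \<in> X0plus" and "\<gamma> k \<ge> 0" and "0 \<le> R'" and "0 \<le> R1"
    and monomers: "z 1 \<le> R' * Nmass z" and ratio: "R1 \<le> q k / q (Suc k)"
    and super: "R' * S k - (R' + R1) * S (Suc k) + R1 * S (Suc (Suc k)) \<le> 0"
    and max: "T k - S k \<le> T (Suc k) - S (Suc k)"
      "T (Suc (Suc k)) - S (Suc (Suc k)) \<le> T (Suc k) - S (Suc k)"
  shows "Jflux q \<gamma> k z \<le> 0"
proof -
  have z_eq: "z n = T n - T (Suc n)" for n
    unfolding T_def using X0plus_summable[OF \<open>z \<in> X0plus\<close>] by (rule tail_sum_diff)
  define e where "e n = T n - S n" for n
  have "R' * z k - R1 * z (Suc k) = R' * (e k - e (Suc k)) + R1 * (e (Suc (Suc k)) - e (Suc k))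
      + (R' * S k - (R' + R1) * S (Suc k) + R1 * S (Suc (Suc k)))"
    unfolding z_eq e_def by (simp add: algebra_simps)
  also have "\<dots> \<le> 0"
    using mult_nonneg_nonpos[OF \<open>0 \<le> R'\<close>, of "e k - e (Suc k)"]
      mult_nonneg_nonpos[OF \<open>0 \<le> R1\<close>, of "e (Suc (Suc k)) - e (Suc k)"] max super
    unfolding e_def by linarith
  finally have balance: "R' * z k \<le> R1 * z (Suc k)" by simp
  have N_nonneg: "Nmass z \<ge> 0" and z_nonneg: "\<And>n. z n \<ge> 0"
    unfolding Nmass_def using X0plus_summable[OF \<open>z \<in> X0plus\<close>] X0plus_nonneg[OF \<open>z \<in> X0plus\<close>]
    by (auto intro: suminf_nonneg)
  have "z 1 * z k \<le> Nmass z * (R' * z k)"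
    using mult_right_mono[OF monomers z_nonneg[of k]] by (simp add: algebra_simps)
  also have "\<dots> \<le> Nmass z * (R1 * z (Suc k))"
    using balance N_nonneg by (rule mult_left_mono)
  also have "\<dots> \<le> Nmass z * (q k / q (Suc k) * z (Suc k))"
    using ratio N_nonneg z_nonneg by (intro mult_left_mono mult_right_mono) auto
  finally show ?thesis
    unfolding Jflux_def using \<open>\<gamma> k \<ge> 0\<close> by (simp add: mult_nonneg_nonpos mult.assoc)
qed

lemma X0plus_rho_nonneg:
  assumes "z \<in> X0plus"
  shows "rho z \<ge> 0"
  unfolding rho_def using X0plus_nonneg[OF assms]
  by (intro suminf_nonneg X0plus_summable_moment[OF assms]) simp

lemma tails_le_supersolution:
  fixes q \<gamma> S :: "nat \<Rightarrow> real" and z :: "real \<Rightarrow> nat \<Rightarrow> real" and R' R1 t0 \<rho>0 :: real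
    and L0 :: nat
  assumes X0plus: "\<And>t. t \<ge> 0 \<Longrightarrow> z t \<in> X0plus"
    and rho: "\<And>t. t \<ge> 0 \<Longrightarrow> rho (z t) = \<rho>0"
    and tails_deriv: "\<And>l t. l \<ge> 2 \<Longrightarrow> t \<ge> 0 \<Longrightarrow>
        ((\<lambda>s. \<Sum>n. z s (n + l)) has_real_derivative Jflux q \<gamma> (l - 1) (z t)) (at t within {0..})"
    and gamma_nonneg: "\<And>l. l \<ge> 1 \<Longrightarrow> \<gamma> l \<ge> 0"
    and "0 \<le> R'" "0 \<le> R1" "2 \<le> L0" "0 \<le> t0"
    and ratio: "\<And>k. k \<ge> L0 \<Longrightarrow> R1 \<le> q k / q (Suc k)"
    and monomers: "\<And>t. t \<ge> t0 \<Longrightarrow> z t 1 \<le> R' * Nmass (z t)"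
    and S_nonneg: "\<And>l. S l \<ge> 0"
    and super: "\<And>k. k \<ge> L0 \<Longrightarrow> R' * S k - (R' + R1) * S (Suc k) + R1 * S (Suc (Suc k)) \<le> 0"
    and "\<rho>0 \<le> S L0"
    and initial: "\<And>l. l \<ge> L0 \<Longrightarrow> (\<Sum>n. z t0 (n + l)) \<le> S l"
    and "l \<ge> L0" "t \<ge> t0"
  shows "(\<Sum>n. z t (n + l)) \<le> S l"
proof -
  define M where "M l t = (\<Sum>n. z t (n + l))" for l t
  have decay: "M l t \<le> \<rho>0 / real l" if "L0 \<le> l" "t0 \<le> t" for l t
  proof -
    have zt: "z t \<in> X0plus" and "rho (z t) = \<rho>0" using X0plus rho that \<open>0 \<le> t0\<close> by auto
    then show ?thesis
      using tail_sum_le_moment_div[where l = l, OF X0plus_nonneg[OF zt]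
          X0plus_summable_moment[OF zt]] that \<open>2 \<le> L0\<close> by (simp add: M_def rho_def)
  qed
  have "M l t \<le> S l"
  proof (rule tail_comparison_principle[where M = M and S = S and Lb = L0 and tb = t0
        and D = "\<lambda>l t. Jflux q \<gamma> (l - 1) (z t)" and C = \<rho>0])
    show "(M l has_real_derivative Jflux q \<gamma> (l - 1) (z t)) (at t within {t0..})"
      if "L0 \<le> l" "t0 \<le> t" for l t
      unfolding M_def using that \<open>2 \<le> L0\<close> \<open>0 \<le> t0\<close> by (intro DERIV_subset[OF tails_deriv]) auto
    show "Jflux q \<gamma> (l - 1) (z t) \<le> 0"
      if "L0 < l" "t0 < t" and max: "\<forall>j\<ge>L0. M j t - S j \<le> M l t - S l" for l t
    proof -
      obtain k where l: "l = Suc k" and "k \<ge> L0" using \<open>L0 < l\<close> by (cases l) auto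
      have "(\<Sum>n. z t (n + k)) - S k \<le> (\<Sum>n. z t (n + Suc k)) - S (Suc k)"
          "(\<Sum>n. z t (n + Suc (Suc k))) - S (Suc (Suc k)) \<le> (\<Sum>n. z t (n + Suc k)) - S (Suc k)"
        using max[rule_format, of k] max[rule_format, of "Suc (Suc k)"] \<open>k \<ge> L0\<close>
        unfolding M_def l by auto
      moreover have "z t \<in> X0plus" "z t 1 \<le> R' * Nmass (z t)" "\<gamma> k \<ge> 0"
        using X0plus monomers gamma_nonneg \<open>t0 < t\<close> \<open>0 \<le> t0\<close> \<open>k \<ge> L0\<close> \<open>2 \<le> L0\<close> by auto
      ultimately show ?thesis
        using Jflux_nonpos_at_max[of "z t" \<gamma> k R' R1 q S] ratio super \<open>k \<ge> L0\<close>
          \<open>0 \<le> R'\<close> \<open>0 \<le> R1\<close> l by simp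
    qed
    show "M L0 t \<le> S L0" if "t0 \<le> t" for t
    proof -
      have "M L0 t \<le> \<rho>0 / real L0" using decay that by simp
      also have "\<dots> \<le> \<rho>0"
        using X0plus_rho_nonneg[OF X0plus[OF \<open>0 \<le> t0\<close>]] rho[OF \<open>0 \<le> t0\<close>] \<open>2 \<le> L0\<close>
        by (simp add: divide_le_eq mult_le_cancel_left1)
      finally show ?thesis using \<open>\<rho>0 \<le> S L0\<close> by simp
    qed
  qed (use decay S_nonneg initial \<open>l \<ge> L0\<close> \<open>t \<ge> t0\<close> in \<open>auto simp: M_def\<close>)
  then show ?thesis by (simp add: M_def)
qed

lemma tails_bounded_by_summable_majorant:
  fixes q \<gamma> :: "nat \<Rightarrow> real" and z :: "real \<Rightarrow> nat \<Rightarrow> real" and R R' t0 \<rho>0 :: real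
  assumes X0plus: "\<And>t. t \<ge> 0 \<Longrightarrow> z t \<in> X0plus"
    and rho: "\<And>t. t \<ge> 0 \<Longrightarrow> rho (z t) = \<rho>0"
    and tails_deriv: "\<And>l t. l \<ge> 2 \<Longrightarrow> t \<ge> 0 \<Longrightarrow>
        ((\<lambda>s. \<Sum>n. z s (n + l)) has_real_derivative Jflux q \<gamma> (l - 1) (z t)) (at t within {0..})"
    and gamma_nonneg: "\<And>l. l \<ge> 1 \<Longrightarrow> \<gamma> l \<ge> 0"
    and ratio_lim: "(\<lambda>l. q l / q (Suc l)) \<longlonglongrightarrow> R" and "0 \<le> R'" "R' < R" "0 \<le> t0"
    and monomers: "\<And>t. t \<ge> t0 \<Longrightarrow> z t 1 \<le> R' * Nmass (z t)"
  obtains S L0 where "summable S" "\<And>n. S (Suc n) \<le> S n" "\<And>n. S n \<ge> 0"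
    "\<And>l t. l \<ge> L0 \<Longrightarrow> t \<ge> t0 \<Longrightarrow> (\<Sum>n. z t (n + l)) \<le> S l"
proof -
  \<comment> \<open>any R1 \<in> (R', R) and any \<beta> \<in> (0, 1) with R' \<le> R1 \<beta> would do\<close>
  define R1 where "R1 = (R' + R) / 2"
  define \<beta> where "\<beta> = (R' + R1) / (2 * R1)"
  have R1: "R' < R1" "R1 < R" "0 < R1"
    using \<open>0 \<le> R'\<close> \<open>R' < R\<close> by (auto simp: R1_def)
  have \<beta>: "0 < \<beta>" "\<beta> < 1" "R' \<le> R1 * \<beta>"
    using R1 \<open>0 \<le> R'\<close> by (auto simp: \<beta>_def field_simps)
  obtain N0 where ratio: "\<And>k. k \<ge> N0 \<Longrightarrow> R1 \<le> q k / q (Suc k)"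
    using order_tendstoD(1)[OF ratio_lim \<open>R1 < R\<close>] unfolding eventually_sequentially
    by (meson less_imp_le)
  define L0 where "L0 = max 2 N0"
  have "\<rho>0 \<ge> 0"
    using X0plus_rho_nonneg[OF X0plus[OF \<open>0 \<le> t0\<close>]] rho[OF \<open>0 \<le> t0\<close>] by simp
  note majorant_prems = \<beta>(1,2) \<open>\<rho>0 \<ge> 0\<close>
    X0plus_nonneg[OF X0plus[OF \<open>0 \<le> t0\<close>]] X0plus_summable_moment[OF X0plus[OF \<open>0 \<le> t0\<close>]]
  define S where "S = tail_majorant \<beta> \<rho>0 L0 (z t0)"
  show thesis
  proof (rule that)
    show "summable S" unfolding S_def by (rule summable_tail_majorant[OF majorant_prems])
    show "S (Suc n) \<le> S n" for n unfolding S_def by (rule tail_majorant_Suc_le[OF majorant_prems])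
    show "S n \<ge> 0" for n unfolding S_def by (rule tail_majorant_nonneg[OF majorant_prems])
    show "(\<Sum>n. z t (n + l)) \<le> S l" if "l \<ge> L0" "t \<ge> t0" for l t
    proof -
      have "0 \<le> R1" "2 \<le> L0" using R1 by (auto simp: L0_def)
      moreover have "R1 \<le> q k / q (Suc k)" if "k \<ge> L0" for k
        using ratio that by (simp add: L0_def)
      moreover have "R' * S k - (R' + R1) * S (Suc k) + R1 * S (Suc (Suc k)) \<le> 0" for k
        using tail_majorant_supersolution[OF majorant_prems, of R1 R' "Suc k"] R1 \<beta>
        by (simp add: S_def)
      moreover have "\<rho>0 \<le> S L0"
        unfolding S_def by (rule tail_majorant_ge_const[OF majorant_prems])
      moreover have "(\<Sum>n. z t0 (n + l)) \<le> S l" for l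
        unfolding S_def by (rule tail_sum_le_tail_majorant[OF majorant_prems])
      ultimately show ?thesis
        using tails_le_supersolution[OF X0plus rho tails_deriv gamma_nonneg \<open>0 \<le> R'\<close> _ _ \<open>0 \<le> t0\<close>
            _ monomers, of R1 L0 S] tail_majorant_nonneg[OF majorant_prems] that
        by (simp add: S_def)
    qed
  qed
qed

lemma rho_omega_limit_eq_if_tails_majorized:
  fixes z :: "real \<Rightarrow> nat \<Rightarrow> real" and S :: "nat \<Rightarrow> real" and \<rho>0 t0 :: real and L0 :: nat
  assumes X0plus: "\<And>t. t \<ge> 0 \<Longrightarrow> z t \<in> X0plus" and rho: "\<And>t. t \<ge> 0 \<Longrightarrow> rho (z t) = \<rho>0"
    and tails: "\<And>l t. l \<ge> L0 \<Longrightarrow> t \<ge> t0 \<Longrightarrow> (\<Sum>n. z t (n + l)) \<le> S l"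
    and S: "summable S" "\<And>n. S (Suc n) \<le> S n" "\<And>n. S n \<ge> 0"
    and "0 \<le> t0" and "w \<in> omega_limit_set z"
  shows "rho w = \<rho>0"
proof -
  have late_nonneg: "z t n \<ge> 0" and late_moment: "summable (\<lambda>n. real n * z t n)"
    if "t \<in> {t0..}" for t n
    using X0plus[of t] that \<open>0 \<le> t0\<close> by (auto intro: X0plus_nonneg X0plus_summable_moment)
  have late_tails: "(\<Sum>n. z t (n + l)) \<le> S l" if "t \<in> {t0..}" "L0 \<le> l" for t l
    using tails that by auto
  have tight: "\<exists>L. \<forall>t\<in>{t0..}. (\<Sum>n. real n * z t n) \<le> (\<Sum>n<L. real n * z t n) + \<epsilon>"
    if "\<epsilon> > 0" for \<epsilon>
    by (rule first_moments_uniformly_tight[OF _ _ _ S(2,3,1) that])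
      (fact late_nonneg late_moment late_tails)+
  obtain tk where "filterlim tk at_top sequentially" and "weak_star_conv (\<lambda>k. z (tk k)) w"
    using \<open>w \<in> omega_limit_set z\<close> unfolding omega_limit_set_def by auto
  then have late: "eventually (\<lambda>k. tk k \<ge> t0) sequentially"
    and conv: "\<And>l. (\<lambda>k. z (tk k) l) \<longlonglongrightarrow> w l"
    unfolding filterlim_at_top weak_star_conv_def by auto
  show ?thesis
  proof (rule rho_limit_eq_if_tight[OF conv])
    show "eventually (\<lambda>k. (\<forall>l. z (tk k) l \<ge> 0) \<and> summable (\<lambda>l. real l * z (tk k) l)
        \<and> rho (z (tk k)) = \<rho>0) sequentially"
      using late by eventually_elim (use late_nonneg late_moment rho \<open>0 \<le> t0\<close> in auto)
    show "\<exists>L. eventually (\<lambda>k. \<rho>0 \<le> (\<Sum>l<L. real l * z (tk k) l) + \<epsilon>) sequentially"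
      if "\<epsilon> > 0" for \<epsilon>
    proof -
      obtain L where L: "\<forall>t\<in>{t0..}. (\<Sum>n. real n * z t n) \<le> (\<Sum>n<L. real n * z t n) + \<epsilon>"
        using tight \<open>\<epsilon> > 0\<close> by blast
      from late have "eventually (\<lambda>k. \<rho>0 \<le> (\<Sum>l<L. real l * z (tk k) l) + \<epsilon>) sequentially"
      proof eventually_elim
        case (elim k)
        then show ?case
          using bspec[OF L, of "tk k"] rho[of "tk k"] \<open>0 \<le> t0\<close> unfolding rho_def by simp
      qed
      then show ?thesis by blast
    qed
  qed
qed

theorem theorem17:
  fixes q \<gamma> y :: "nat \<Rightarrow> real" and R R' t0 :: real and z :: "real \<Rightarrow> nat \<Rightarrow> real"
  assumes q_pos: "\<forall>l\<ge>1. q l > 0" and q1: "q 1 = 1"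
    and R_lim: "(\<lambda>l. q l / q (Suc l)) \<longlonglongrightarrow> R" and R_pos: "0 < R"
    and gamma_pos: "\<forall>l\<ge>1. \<gamma> l > 0" and gamma_lim: "(\<lambda>l. \<gamma> l / real l) \<longlonglongrightarrow> 0"
    and y: "y \<in> X0plus" and y1: "y 1 > 0" and rho0: "rho y > 0"
    and z: "constructed_solution q \<gamma> y z"
    and R': "0 \<le> R'" "R' < R" and t0: "t0 \<ge> 0"
    and lam: "\<forall>t\<ge>t0. z t 1 / Nmass (z t) \<le> R'"
  shows "\<forall>w \<in> omega_limit_set z. rho w = rho y"
proof
  fix w assume w: "w \<in> omega_limit_set z"
  have X0plus: "\<And>t. t \<ge> 0 \<Longrightarrow> z t \<in> X0plus" and rho: "\<And>t. t \<ge> 0 \<Longrightarrow> rho (z t) = rho y"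
    and tails_deriv: "\<And>l t. l \<ge> 2 \<Longrightarrow> t \<ge> 0 \<Longrightarrow>
        ((\<lambda>s. \<Sum>n. z s (n + l)) has_real_derivative Jflux q \<gamma> (l - 1) (z t)) (at t within {0..})"
    using z unfolding constructed_solution_def by auto
  have monomers: "z t 1 \<le> R' * Nmass (z t)" if "t \<ge> t0" for t
    using X0plus_monomers_le_mult_Nmass X0plus lam that t0 by auto
  have gamma_nonneg: "\<And>l. l \<ge> 1 \<Longrightarrow> \<gamma> l \<ge> 0"
    using gamma_pos by (simp add: less_imp_le)
  obtain S L0 where S: "summable S" "\<And>n. S (Suc n) \<le> S n" "\<And>n. S n \<ge> 0"
    and tails: "\<And>l t. l \<ge> L0 \<Longrightarrow> t \<ge> t0 \<Longrightarrow> (\<Sum>n. z t (n + l)) \<le> S l"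
    using tails_bounded_by_summable_majorant[OF X0plus rho tails_deriv gamma_nonneg R_lim R' t0
        monomers] by blast
  show "rho w = rho y"
    by (rule rho_omega_limit_eq_if_tails_majorized[OF X0plus rho tails S t0 w])
qed

end
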